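(* Let $p$ be a prime with $p \equiv 1 \pmod 6$. Then for every integer $e \ge 1$ there is a unique (up to isomorphism) 6-valent first-kind Frobenius circulant with cyclic kernel of order $p^e$, namely $\Gamma(p^e) = TL_{p^e}(a_e, a_e - 1, 1)$, where $a_e \equiv (p^e+1)(v+1)/2 \pmod{p^e}$ with $v$ a solution of $x^2 \equiv -3 \pmod{p^e}$.
   Context: For $n\ge 7$, $\mathbb{Z}_n$ is the integers modulo $n$ with residue classes $[m]$, and $\mathbb{Z}_n^*$ its unit group acting on $\mathbb{Z}_n$ by multiplication. $\mathrm{Cay}(K,S)$ is the Cayley graph (vertices $K$, $x\sim y$ iff $xy^{-1}\in S$). For integers $a,b,c$ with $a,b,c,n-a,n-b,n-c$ pairwise distinct modulo $n$, $TL_n(a,b,c)=\mathrm{Cay}(\mathbb{Z}_n,\{\pm[a],\pm[b],\pm[c]\})$. A Frobenius group is a transitive, non-regular permutation group in which only the identity fixes two points; a finite one is $K\rtimes H$ with regular normal kernel $K$ and point stabiliser $H$ acting on $K$ by conjugation. A first-kind $K\rtimes H$-Frobenius graph is $\mathrm{Cay}(K,s^H)$ with $\langle s^H\rangle=K$ and $|H|$ even or $s$ an involution. A 6-valent first-kind Frobenius circulant with cyclic kernel of order $n$ is a 6-valent $TL_n(a,b,c)$ that is a first-kind $\mathbb{Z}_n\rtimes H$-Frobenius graph for some $H\le\mathbb{Z}_n^*$ such that $\mathbb{Z}_n\rtimes H$ (acting by $[x]^{([y],[m])}=[(x+y)m]$) is a Frobenius group with kernel $\mathbb{Z}_n$.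 *)

theory Defs
  imports "HOL-Number_Theory.Number_Theory"
begin

text \<open>Z_n is represented by the residues {0..<n} (as integers); graphs on Z_n are
  edge predicates on int restricted to that vertex set.\<close>

definition Zn :: "int \<Rightarrow> int set" where
  "Zn n = {0..<n}"

definition cay :: "int \<Rightarrow> int set \<Rightarrow> int \<Rightarrow> int \<Rightarrow> bool" where
  "cay n S = (\<lambda>x y. x \<in> Zn n \<and> y \<in> Zn n \<and> (x - y) mod n \<in> S)"

definition tl_set :: "int \<Rightarrow> int \<Rightarrow> int \<Rightarrow> int \<Rightarrow> int set" where
  "tl_set n a b c = {a mod n, (-a) mod n, b mod n, (-b) mod n, c mod n, (-c) mod n}"

definition tl_ok :: "int \<Rightarrow> int \<Rightarrow> int \<Rightarrow> int \<Rightarrow> bool" where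
  "tl_ok n a b c \<longleftrightarrow> card (tl_set n a b c) = 6"

definition TL :: "int \<Rightarrow> int \<Rightarrow> int \<Rightarrow> int \<Rightarrow> int \<Rightarrow> int \<Rightarrow> bool" where
  "TL n a b c = cay n (tl_set n a b c)"

definition unit_subgroup :: "int \<Rightarrow> int set \<Rightarrow> bool" where
  "unit_subgroup n H \<longleftrightarrow> H \<subseteq> {m \<in> Zn n. coprime m n} \<and> 1 mod n \<in> H \<and>
     (\<forall>h\<in>H. \<forall>k\<in>H. (h * k) mod n \<in> H)"

text \<open>The permutation group Z_n \<rtimes> H acting on Z_n by [x] \<mapsto> [(x+y)m].\<close>
definition semidirect_perms :: "int \<Rightarrow> int set \<Rightarrow> (int \<Rightarrow> int) set" where
  "semidirect_perms n H = {(\<lambda>x. ((x + y) * m) mod n) | y m. y \<in> Zn n \<and> m \<in> H}"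

definition frobenius_perm_group :: "'a set \<Rightarrow> ('a \<Rightarrow> 'a) set \<Rightarrow> bool" where
  "frobenius_perm_group \<Omega> G \<longleftrightarrow>
     (\<forall>x\<in>\<Omega>. \<forall>y\<in>\<Omega>. \<exists>g\<in>G. g x = y) \<and>
     (\<exists>g\<in>G. \<exists>x\<in>\<Omega>. g x = x \<and> (\<exists>z\<in>\<Omega>. g z \<noteq> z)) \<and>
     (\<forall>g\<in>G. (\<exists>x\<in>\<Omega>. \<exists>y\<in>\<Omega>. x \<noteq> y \<and> g x = x \<and> g y = y) \<longrightarrow> (\<forall>z\<in>\<Omega>. g z = z))"

definition frobenius_kernel :: "'a set \<Rightarrow> ('a \<Rightarrow> 'a) set \<Rightarrow> ('a \<Rightarrow> 'a) set" where
  "frobenius_kernel \<Omega> G = {g \<in> G. (\<forall>z\<in>\<Omega>. g z = z) \<or> (\<forall>z\<in>\<Omega>. g z \<noteq> z)}"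

definition transl_maps :: "int \<Rightarrow> (int \<Rightarrow> int) set" where
  "transl_maps n = {(\<lambda>x. (x + y) mod n) | y. y \<in> Zn n}"

text \<open>Z_n \<rtimes> H is a Frobenius group with kernel Z_n (kernel compared as maps on Z_n).\<close>
definition frobenius_ZnH :: "int \<Rightarrow> int set \<Rightarrow> bool" where
  "frobenius_ZnH n H \<longleftrightarrow> unit_subgroup n H \<and>
     frobenius_perm_group (Zn n) (semidirect_perms n H) \<and>
     (\<forall>g \<in> semidirect_perms n H.
        g \<in> frobenius_kernel (Zn n) (semidirect_perms n H) \<longleftrightarrow>
        (\<exists>t\<in>transl_maps n. \<forall>x\<in>Zn n. g x = t x))"

definition orbit :: "int \<Rightarrow> int set \<Rightarrow> int \<Rightarrow> int set" where
  "orbit n H s = {(s * h) mod n | h. h \<in> H}"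

inductive_set add_span :: "int \<Rightarrow> int set \<Rightarrow> int set" for n S where
  zero: "0 \<in> add_span n S"
| step: "x \<in> add_span n S \<Longrightarrow> s \<in> S \<Longrightarrow> (x + s) mod n \<in> add_span n S"

definition first_kind :: "int \<Rightarrow> int set \<Rightarrow> int \<Rightarrow> bool" where
  "first_kind n H s \<longleftrightarrow> s \<in> Zn n \<and> add_span n (orbit n H s) = Zn n \<and>
     (even (card H) \<or> (s \<noteq> 0 \<and> (2 * s) mod n = 0))"

definition six_valent_FFC :: "int \<Rightarrow> (int \<Rightarrow> int \<Rightarrow> bool) \<Rightarrow> bool" where
  "six_valent_FFC n \<Gamma> \<longleftrightarrow> (\<exists>a b c. tl_ok n a b c \<and> \<Gamma> = TL n a b c \<and>
     (\<exists>H s. frobenius_ZnH n H \<and> first_kind n H s \<and> \<Gamma> = cay n (orbit n H s)))"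

definition graph_iso :: "int \<Rightarrow> (int \<Rightarrow> int \<Rightarrow> bool) \<Rightarrow> (int \<Rightarrow> int \<Rightarrow> bool) \<Rightarrow> bool" where
  "graph_iso n G1 G2 \<longleftrightarrow> (\<exists>f. bij_betw f (Zn n) (Zn n) \<and>
     (\<forall>x\<in>Zn n. \<forall>y\<in>Zn n. G1 x y \<longleftrightarrow> G2 (f x) (f y)))"

end

theory Submission
  imports Defs
begin

text \<open>
  For \<open>n = p^e\<close> and \<open>a = (n + 1)/2 \<cdot> (v + 1)\<close> we have \<open>4(a^2 - a + 1) \<equiv> v^2 + 3 \<equiv> 0\<close>, so \<open>a\<close>
  is a primitive sixth root of unity modulo \<open>n\<close> and \<open>{\<plusminus>a, \<plusminus>(a - 1), \<plusminus>1}\<close> is the group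
  \<open>\<langle>a\<rangle>\<close> of its powers. Since \<open>a^k - 1\<close> is a unit for \<open>0 < k < 6\<close>, \<open>\<langle>a\<rangle>\<close> acts
  fixed-point-freely on \<open>\<int>\<^sub>n\<close>, and \<open>TL\<^sub>n(a, a - 1, 1) = Cay(\<int>\<^sub>n, \<langle>a\<rangle>)\<close> is a first-kind
  Frobenius graph with \<open>s = 1\<close>.

  Conversely, a 6-valent first-kind Frobenius circulant is \<open>Cay(\<int>\<^sub>n, s\<^sup>H)\<close> with \<open>|H| = 6\<close> and
  \<open>s\<close> a unit (as \<open>s\<^sup>H\<close> generates \<open>\<int>\<^sub>n\<close>). Every \<open>h \<in> H\<close> is a root of
  \<open>x^6 - 1 \<equiv> (x - 1)(x - a)\<cdots>(x - a^5)\<close>, and the \<open>a^k\<close> are pairwise distinct modulo \<open>p\<close>,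
  so \<open>H = \<langle>a\<rangle>\<close>; multiplication by \<open>s\<^sup>-\<^sup>1\<close> then maps \<open>Cay(\<int>\<^sub>n, s\<^sup>H)\<close> onto
  \<open>Cay(\<int>\<^sub>n, \<langle>a\<rangle>)\<close>.
\<close>

lemma Zn_mod: "x \<in> Zn n \<Longrightarrow> x mod n = x"
  by (simp add: Zn_def)

lemma mod_in_Zn: "n > 0 \<Longrightarrow> x mod n \<in> Zn n"
  by (simp add: Zn_def)

lemma finite_Zn: "finite (Zn n)"
  by (simp add: Zn_def)

lemma Zn_eq_if_dvd_diff: "x \<in> Zn n \<Longrightarrow> y \<in> Zn n \<Longrightarrow> n dvd x - y \<Longrightarrow> x = y"
  by (metis Zn_mod mod_eq_dvd_iff)

lemma Zn_cong_imp_eq: "x \<in> Zn n \<Longrightarrow> [y = x] (mod n) \<Longrightarrow> y mod n = x"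
  by (simp add: Zn_mod cong_def)

lemma orbit_eq_image: "orbit n H s = (\<lambda>h. (s * h) mod n) ` H"
  unfolding orbit_def by (rule Setcompr_eq_image)

lemma orbit_subset_Zn: "n > 0 \<Longrightarrow> orbit n H s \<subseteq> Zn n"
  unfolding orbit_eq_image by (auto simp: mod_in_Zn)

lemma tl_set_subset_Zn: "n > 0 \<Longrightarrow> tl_set n a b c \<subseteq> Zn n"
  unfolding tl_set_def by (simp add: mod_in_Zn)

lemma cong_mult_unit_iff:
  fixes n :: int
  assumes st: "[s * t = 1] (mod n)"
  shows "[x = s * h] (mod n) \<longleftrightarrow> [t * x = h] (mod n)"
proof
  have "[(s * t) * y = 1 * y] (mod n)" for y
    using st by (rule cong_scalar_right)
  then have cancel: "[t * (s * y) = y] (mod n)" "[s * (t * y) = y] (mod n)" for y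
    by (simp_all add: mult.assoc mult.left_commute)
  show "[t * x = h] (mod n)" if "[x = s * h] (mod n)"
    using cong_scalar_left[OF that, of t] cancel(1) by (rule cong_trans)
  show "[x = s * h] (mod n)" if "[t * x = h] (mod n)"
    using cong_sym[OF cancel(2)] cong_scalar_left[OF that, of s] by (rule cong_trans)
qed

subsection \<open>Cayley graphs on \<open>\<int>\<^sub>n\<close>\<close>

lemma cay_0_iff: "n > 0 \<Longrightarrow> d \<in> Zn n \<Longrightarrow> cay n S d 0 \<longleftrightarrow> d \<in> S"
  unfolding cay_def by (simp add: Zn_mod Zn_def)

lemma cay_eq_imp_eq:
  assumes "n > 0" "S1 \<subseteq> Zn n" "S2 \<subseteq> Zn n" "cay n S1 = cay n S2"
  shows "S1 = S2"
  using assms cay_0_iff[OF \<open>n > 0\<close>] by (metis subsetD subset_antisym subsetI)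

lemma graph_iso_cay_scale:
  fixes n :: int
  assumes "n > 0" "coprime s n" "S \<subseteq> Zn n"
  shows "graph_iso n (cay n ((\<lambda>h. (s * h) mod n) ` S)) (cay n S)"
proof -
  obtain t where t: "[s * t = 1] (mod n)"
    using cong_solve_coprime_int[OF \<open>coprime s n\<close>] by blast
  have "coprime t n"
    using t coprime_iff_invertible_int by (metis mult.commute)
  define f where "f x = (t * x) mod n" for x
  have f_Zn: "f ` Zn n \<subseteq> Zn n"
    unfolding f_def using \<open>n > 0\<close> mod_in_Zn by auto
  have "inj_on f (Zn n)"
  proof (rule inj_onI)
    fix x y assume "x \<in> Zn n" "y \<in> Zn n" "f x = f y"
    moreover from \<open>f x = f y\<close> have "[x * t = y * t] (mod n)"
      unfolding cong_def f_def by (simp add: mult.commute)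
    ultimately show "x = y"
      using cong_mult_rcancel[OF \<open>coprime t n\<close>] by (metis Zn_mod cong_def)
  qed
  then have "bij_betw f (Zn n) (Zn n)"
    using endo_inj_surj[OF finite_Zn f_Zn] by (simp add: bij_betw_def)
  moreover have "cay n ((\<lambda>h. (s * h) mod n) ` S) x y \<longleftrightarrow> cay n S (f x) (f y)"
    if "x \<in> Zn n" "y \<in> Zn n" for x y
  proof -
    have "(f x - f y) mod n = (t * (x - y)) mod n"
      unfolding f_def by (simp add: mod_diff_eq right_diff_distrib)
    moreover have "(x - y) mod n \<in> (\<lambda>h. (s * h) mod n) ` S \<longleftrightarrow> (\<exists>h\<in>S. [x - y = s * h] (mod n))"
      by (auto simp: cong_def)
    moreover have "(t * (x - y)) mod n \<in> S \<longleftrightarrow> (\<exists>h\<in>S. [t * (x - y) = h] (mod n))"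
      using \<open>S \<subseteq> Zn n\<close> Zn_cong_imp_eq by (metis cong_def mod_mod_trivial subsetD)
    ultimately show ?thesis
      using that f_Zn cong_mult_unit_iff[OF t] by (auto simp: cay_def)
  qed
  ultimately show ?thesis
    unfolding graph_iso_def by blast
qed

subsection \<open>Subgroups of the unit group\<close>

text \<open>Euler's argument: \<open>x \<mapsto> h x\<close> permutes \<open>H\<close>, so \<open>\<Prod>H \<equiv> h^|H| \<Prod>H\<close>.\<close>
lemma unit_subgroup_pow_card:
  assumes U: "unit_subgroup n H" and h: "h \<in> H"
  shows "[h ^ card H = 1] (mod n)"
proof -
  have HZ: "H \<subseteq> Zn n" and cp: "\<And>x. x \<in> H \<Longrightarrow> coprime x n"
    and cl: "\<And>x y. x \<in> H \<Longrightarrow> y \<in> H \<Longrightarrow> (x * y) mod n \<in> H"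
    using U unfolding unit_subgroup_def by auto
  define f where "f x = (h * x) mod n" for x
  have "inj_on f H"
  proof (rule inj_onI)
    fix x y assume "x \<in> H" "y \<in> H" "f x = f y"
    moreover from \<open>f x = f y\<close> have "[x * h = y * h] (mod n)"
      unfolding f_def cong_def by (simp add: mult.commute)
    ultimately show "x = y"
      using cong_mult_rcancel[OF cp[OF h]] HZ by (metis Zn_mod cong_def subsetD)
  qed
  moreover have "f ` H = H"
    using endo_inj_surj[OF finite_subset[OF HZ finite_Zn] _ \<open>inj_on f H\<close>] cl h
    unfolding f_def by auto
  ultimately have "prod id H = prod f H"
    by (metis prod.reindex_cong id_apply)
  also have "[prod f H = prod (\<lambda>x. h * x) H] (mod n)"
    unfolding f_def by (rule cong_prod) (simp add: cong_def)
  also have "prod (\<lambda>x. h * x) H = h ^ card H * prod id H"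
    by (simp add: prod.distrib)
  finally have "[1 * prod id H = h ^ card H * prod id H] (mod n)"
    by simp
  moreover have "coprime (prod id H) n"
    by (rule prod_coprime_left) (simp add: cp)
  ultimately show ?thesis
    using cong_mult_rcancel by (metis cong_sym)
qed

subsection \<open>A Frobenius criterion for \<open>\<int>\<^sub>n \<rtimes> H\<close>\<close>

lemma semidirect_perms_memI:
  "y \<in> Zn n \<Longrightarrow> m \<in> H \<Longrightarrow> (\<lambda>x. ((x + y) * m) mod n) \<in> semidirect_perms n H"
  unfolding semidirect_perms_def by blast

lemma transl_maps_memI: "y \<in> Zn n \<Longrightarrow> (\<lambda>x. (x + y) mod n) \<in> transl_maps n"
  unfolding transl_maps_def by blast

lemma semidirect_perms_transitive:
  assumes "n > 0" "1 \<in> H"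
  shows "\<forall>x\<in>Zn n. \<forall>y\<in>Zn n. \<exists>g\<in>semidirect_perms n H. g x = y"
proof (intro ballI)
  fix x y assume "x \<in> Zn n" "y \<in> Zn n"
  define g where "g z = ((z + (y - x) mod n) * 1) mod n" for z
  have "g \<in> semidirect_perms n H"
    unfolding g_def[abs_def] by (rule semidirect_perms_memI[OF mod_in_Zn[OF assms(1)] assms(2)])
  moreover have "g x = y"
    unfolding g_def using Zn_mod[OF \<open>y \<in> Zn n\<close>] by (simp add: mod_add_right_eq)
  ultimately show "\<exists>g\<in>semidirect_perms n H. g x = y"
    by blast
qed

lemma semidirect_perms_not_regular:
  assumes "n > 1" "m \<in> H" "m \<in> Zn n" "m \<noteq> 1"
  shows "\<exists>g\<in>semidirect_perms n H. \<exists>x\<in>Zn n. g x = x \<and> (\<exists>z\<in>Zn n. g z \<noteq> z)"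
proof -
  define g where "g z = ((z + 0) * m) mod n" for z
  have "0 \<in> Zn n" "1 \<in> Zn n"
    using assms by (simp_all add: Zn_def)
  have "g \<in> semidirect_perms n H"
    unfolding g_def[abs_def] by (rule semidirect_perms_memI[OF \<open>0 \<in> Zn n\<close> \<open>m \<in> H\<close>])
  moreover have "g 0 = 0" "g 1 \<noteq> 1"
    unfolding g_def using assms Zn_mod by simp_all
  ultimately show ?thesis
    using \<open>0 \<in> Zn n\<close> \<open>1 \<in> Zn n\<close> by blast
qed

lemma semidirect_perms_fix_two_imp_id:
  assumes cop: "\<forall>m\<in>H. m \<noteq> 1 \<longrightarrow> coprime (m - 1) n"
  shows "\<forall>g\<in>semidirect_perms n H. (\<exists>x\<in>Zn n. \<exists>y\<in>Zn n. x \<noteq> y \<and> g x = x \<and> g y = y) \<longrightarrow>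
    (\<forall>z\<in>Zn n. g z = z)"
proof (intro ballI impI)
  fix g z assume g: "g \<in> semidirect_perms n H"
    and "\<exists>x\<in>Zn n. \<exists>y\<in>Zn n. x \<noteq> y \<and> g x = x \<and> g y = y" and z: "z \<in> Zn n"
  then obtain x1 x2 where x: "x1 \<in> Zn n" "x2 \<in> Zn n" "x1 \<noteq> x2" "g x1 = x1" "g x2 = x2"
    by blast
  from g obtain y m where gd: "g = (\<lambda>x. ((x + y) * m) mod n)" "y \<in> Zn n" "m \<in> H"
    unfolding semidirect_perms_def by blast
  have fix_dvd: "n dvd (x + y) * m - x" if "x \<in> Zn n" "g x = x" for x
    using that gd Zn_mod by (metis mod_eq_dvd_iff)
  show "g z = z"
  proof (cases "m = 1")
    case True
    with fix_dvd[OF x(1,4)] have "n dvd y - 0"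
      by simp
    then have "y = 0"
      using Zn_eq_if_dvd_diff[OF gd(2)] x(1) by (auto simp: Zn_def)
    then show "g z = z"
      using gd True Zn_mod[OF z] by simp
  next
    case False
    have "(x1 - x2) * (m - 1) = ((x1 + y) * m - x1) - ((x2 + y) * m - x2)"
      by (simp add: algebra_simps)
    then have "n dvd (x1 - x2) * (m - 1)"
      using fix_dvd[OF x(1,4)] fix_dvd[OF x(2,5)] by simp
    then have "n dvd x1 - x2"
      using cop gd(3) False by (metis coprime_commute coprime_dvd_mult_left_iff)
    with x show "g z = z"
      using Zn_eq_if_dvd_diff by blast
  qed
qed

lemma affine_map_fixed_point:
  fixes n :: int
  assumes "n > 0" "coprime (m - 1) n"
  obtains x where "x \<in> Zn n" "((x + y) * m) mod n = x"
proof -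
  obtain w where w: "[(m - 1) * w = 1] (mod n)"
    using cong_solve_coprime_int[OF assms(2)] by blast
  define x where "x = (- (y * m * w)) mod n"
  have "x \<in> Zn n"
    unfolding x_def using assms mod_in_Zn by simp
  have "n dvd x + y * m * w"
    unfolding x_def by (metis add.commute diff_minus_eq_add mod_eq_dvd_iff mod_mod_trivial)
  moreover have "n dvd w * (m - 1) - 1"
    using w by (simp add: cong_iff_dvd_diff mult.commute)
  ultimately have "n dvd (x + y * m * w) * (m - 1) - (y * m) * (w * (m - 1) - 1)"
    by (simp add: dvd_diff dvd_mult2 dvd_mult)
  also have "(x + y * m * w) * (m - 1) - (y * m) * (w * (m - 1) - 1) = (x + y) * m - x"
    by (simp add: algebra_simps)
  finally have "n dvd (x + y) * m - x" .
  then have "((x + y) * m) mod n = x"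
    using Zn_mod[OF \<open>x \<in> Zn n\<close>] by (metis mod_eq_dvd_iff)
  with \<open>x \<in> Zn n\<close> that show ?thesis
    by blast
qed

lemma semidirect_perms_kernel_iff_translation:
  assumes n: "n > 0" and cop: "\<forall>m\<in>H. m \<noteq> 1 \<longrightarrow> coprime (m - 1) n"
  shows "\<forall>g\<in>semidirect_perms n H. g \<in> frobenius_kernel (Zn n) (semidirect_perms n H) \<longleftrightarrow>
    (\<exists>t\<in>transl_maps n. \<forall>x\<in>Zn n. g x = t x)"
proof (intro ballI iffI)
  fix g assume g: "g \<in> semidirect_perms n H"
  from g obtain y m where gd: "g = (\<lambda>x. ((x + y) * m) mod n)" "y \<in> Zn n" "m \<in> H"
    unfolding semidirect_perms_def by blast
  have "0 \<in> Zn n"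
    using n by (simp add: Zn_def)
  then have id_transl: "(\<lambda>x. (x + 0) mod n) \<in> transl_maps n"
    by (rule transl_maps_memI)
  assume kernel: "g \<in> frobenius_kernel (Zn n) (semidirect_perms n H)"
  show "\<exists>t\<in>transl_maps n. \<forall>x\<in>Zn n. g x = t x"
  proof (cases "m = 1")
    case True
    with gd(1) have "\<forall>x\<in>Zn n. g x = (x + y) mod n"
      by simp
    then show ?thesis
      by (rule bexI[OF _ transl_maps_memI[OF gd(2)]])
  next
    case False
    with cop gd(3) have "coprime (m - 1) n"
      by blast
    then obtain x where "x \<in> Zn n" "((x + y) * m) mod n = x"
      by (rule affine_map_fixed_point[OF n])
    with gd(1) have "x \<in> Zn n" "g x = x"
      by simp_all
    then have "\<forall>z\<in>Zn n. g z = z"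
      using kernel unfolding frobenius_kernel_def by auto
    then show ?thesis
      by (intro bexI[OF _ id_transl]) (simp add: Zn_mod)
  qed
next
  fix g assume g: "g \<in> semidirect_perms n H" and "\<exists>t\<in>transl_maps n. \<forall>x\<in>Zn n. g x = t x"
  then obtain y where y: "y \<in> Zn n" "\<forall>x\<in>Zn n. g x = (x + y) mod n"
    unfolding transl_maps_def by blast
  have "g z \<noteq> z" if "y \<noteq> 0" "z \<in> Zn n" for z
  proof
    assume "g z = z"
    then have "n dvd y - 0"
      using y that Zn_mod by (metis add_diff_cancel_left' diff_zero mod_eq_dvd_iff)
    then show False
      using Zn_eq_if_dvd_diff[OF y(1)] n that by (auto simp: Zn_def)
  qed
  then show "g \<in> frobenius_kernel (Zn n) (semidirect_perms n H)"
    using g y Zn_mod unfolding frobenius_kernel_def by (cases "y = 0") auto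
qed

lemma frobenius_ZnH_if_fixed_point_free:
  assumes n: "n > 1" and U: "unit_subgroup n H" and "m \<in> H" "m \<noteq> 1"
    and cop: "\<forall>m\<in>H. m \<noteq> 1 \<longrightarrow> coprime (m - 1) n"
  shows "frobenius_ZnH n H"
proof -
  have "H \<subseteq> Zn n" "1 \<in> H"
    using U n unfolding unit_subgroup_def by auto
  have "n > 0"
    using n by simp
  show ?thesis
    unfolding frobenius_ZnH_def frobenius_perm_group_def
    by (intro conjI U semidirect_perms_transitive[OF \<open>n > 0\<close> \<open>1 \<in> H\<close>]
        semidirect_perms_not_regular[OF n \<open>m \<in> H\<close> subsetD[OF \<open>H \<subseteq> Zn n\<close> \<open>m \<in> H\<close>] \<open>m \<noteq> 1\<close>]
        semidirect_perms_fix_two_imp_id[OF cop] semidirect_perms_kernel_iff_translation[OF \<open>n > 0\<close> cop])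
qed

subsection \<open>Generating sets and first-kind Frobenius circulants\<close>

lemma add_span_subset_Zn:
  assumes "n > 0"
  shows "add_span n S \<subseteq> Zn n"
proof
  fix x assume "x \<in> add_span n S"
  then show "x \<in> Zn n"
    by induction (use assms in \<open>auto simp: Zn_def\<close>)
qed

lemma add_span_eq_Zn:
  assumes "n > 0" "1 \<in> S"
  shows "add_span n S = Zn n"
proof
  have "int k \<in> add_span n S" if "int k < n" for k
    using that
  proof (induction k)
    case (Suc k)
    then have "(int k + 1) mod n \<in> add_span n S"
      using \<open>1 \<in> S\<close> by (intro add_span.step) auto
    with Suc.prems show ?case
      by (simp add: add.commute)
  qed (simp add: add_span.zero)
  then show "Zn n \<subseteq> add_span n S"
    by (auto simp: Zn_def) (metis nonneg_int_cases)
qed (rule add_span_subset_Zn[OF \<open>n > 0\<close>])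

lemma dvd_add_span:
  assumes "d dvd n" "\<forall>s\<in>S. d dvd s" "x \<in> add_span n S"
  shows "d dvd x"
  using assms(3) by induction (use assms in \<open>auto simp: dvd_mod_iff\<close>)

lemma first_kind_coprime:
  assumes "first_kind n H s" "n > 1"
  shows "coprime s n"
proof -
  have "\<forall>x\<in>orbit n H s. gcd s n dvd x"
    unfolding orbit_def by (auto simp: dvd_mod_iff)
  moreover have "1 \<in> add_span n (orbit n H s)"
    using assms unfolding first_kind_def by (simp add: Zn_def)
  ultimately have "gcd s n dvd 1"
    using dvd_add_span by blast
  then show ?thesis
    by (simp add: coprime_iff_gcd_eq_1)
qed

lemma card_orbit:
  assumes "coprime s n" "H \<subseteq> Zn n"
  shows "card (orbit n H s) = card H"
proof -
  have "inj_on (\<lambda>h. (s * h) mod n) H"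
  proof (rule inj_onI)
    fix x y assume "x \<in> H" "y \<in> H" "(s * x) mod n = (s * y) mod n"
    then show "x = y"
      using cong_mult_lcancel[OF assms(1)] assms(2) by (metis Zn_mod cong_def subsetD)
  qed
  then show ?thesis
    unfolding orbit_eq_image by (rule card_image)
qed

lemma six_valent_FFC_imp_orbit_graph:
  assumes "six_valent_FFC n \<Gamma>" "n > 1"
  obtains H s where "unit_subgroup n H" "card H = 6" "coprime s n" "\<Gamma> = cay n (orbit n H s)"
proof -
  obtain a b c H s where ok: "tl_ok n a b c" and tl: "\<Gamma> = TL n a b c"
    and fr: "frobenius_ZnH n H" and fk: "first_kind n H s" and orb: "\<Gamma> = cay n (orbit n H s)"
    using assms(1) unfolding six_valent_FFC_def by blast
  have U: "unit_subgroup n H"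
    using fr unfolding frobenius_ZnH_def by blast
  have "n > 0"
    using assms(2) by simp
  have "tl_set n a b c = orbit n H s"
    using cay_eq_imp_eq[OF \<open>n > 0\<close> tl_set_subset_Zn orbit_subset_Zn] \<open>n > 0\<close> tl orb
    unfolding TL_def by simp
  moreover have "coprime s n"
    using first_kind_coprime[OF fk assms(2)] .
  moreover have "H \<subseteq> Zn n"
    using U unfolding unit_subgroup_def by auto
  ultimately have "card H = 6"
    using ok card_orbit unfolding tl_ok_def by metis
  with U \<open>coprime s n\<close> orb that show ?thesis
    by blast
qed

lemma sqrt_neg3_imp_dvd_sixth_cyclotomic:
  fixes n v :: int
  assumes "odd n" "[v^2 = -3] (mod n)"
  defines "a \<equiv> ((n + 1) div 2) * (v + 1)"
  shows "n dvd a^2 - a + 1"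
proof -
  define c where "c = (n + 1) div 2"
  have "2 * c = n + 1"
    using \<open>odd n\<close> unfolding c_def by presburger
  have "4 * (a^2 - a + 1) = (2 * c)^2 * (v + 1)^2 - 2 * (2 * c) * (v + 1) + 4"
    unfolding a_def c_def[symmetric] by (simp add: power2_eq_square algebra_simps)
  also have "\<dots> = (v^2 - (-3)) + n * ((v + 1)^2 * (n + 2) - 2 * (v + 1))"
    unfolding \<open>2 * c = n + 1\<close> by (simp add: power2_eq_square algebra_simps)
  finally have "4 * (a^2 - a + 1) = (v^2 - (-3)) + n * ((v + 1)^2 * (n + 2) - 2 * (v + 1))" .
  moreover have "n dvd (v^2 - (-3)) + n * ((v + 1)^2 * (n + 2) - 2 * (v + 1))"
    using assms(2) unfolding cong_iff_dvd_diff by (rule dvd_add) (rule dvd_triv_left)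
  ultimately have "n dvd 4 * (a^2 - a + 1)"
    by (simp only:)
  moreover have "coprime n 4"
    using \<open>odd n\<close> coprime_power_right_iff[of n 2 2] by simp
  ultimately show ?thesis
    using coprime_dvd_mult_right_iff by blast
qed

subsection \<open>Primitive sixth roots of unity modulo a prime power\<close>

locale primitive_sixth_root =
  fixes p e :: nat and n a :: int
  assumes prime_p: "prime p" and p_gt_3: "p > 3" and e_pos: "e \<ge> 1"
    and n_eq: "n = int p ^ e" and n_dvd: "n dvd a^2 - a + 1"
begin

lemma prime_int_p: "prime (int p)"
  using prime_p by (simp add: prime_nat_int_transfer)

lemma p_dvd_n: "int p dvd n"
  using e_pos n_eq by (simp add: dvd_power)

lemma n_gt_1: "n > 1"
  using one_less_power[OF prime_gt_1_int[OF prime_int_p]] e_pos n_eq by simp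

lemma coprime_n_iff: "coprime x n \<longleftrightarrow> \<not> int p dvd x"
  unfolding n_eq using prime_int_p e_pos
  by (meson coprime_common_divisor dvd_power not_prime_unit order_less_le_trans
      prime_imp_power_coprime zero_less_one)

lemma cong_n_imp_cong_p: "[x = y] (mod n) \<Longrightarrow> [x = y] (mod int p)"
  using p_dvd_n cong_dvd_modulus by blast

lemma p_dvd_if_dvd_a_sub: "int p dvd a - c \<Longrightarrow> int p dvd c^2 - c + 1"
proof -
  assume "int p dvd a - c"
  moreover have "c^2 - c + 1 = (a^2 - a + 1) - (a - c) * (a + c - 1)"
    by (simp add: power2_eq_square algebra_simps)
  ultimately show ?thesis
    using dvd_trans[OF p_dvd_n n_dvd] by (metis dvd_diff dvd_mult2)
qed

lemma not_p_dvd_small: "\<not> int p dvd 1" "\<not> int p dvd 2" "\<not> int p dvd 3"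
  using p_gt_3 zdvd_imp_le[of "int p" 1] zdvd_imp_le[of "int p" 2] zdvd_imp_le[of "int p" 3] by auto

lemma not_p_dvd_a: "\<not> int p dvd a"
  and not_p_dvd_a_sub_1: "\<not> int p dvd a - 1"
  and not_p_dvd_a_add_1: "\<not> int p dvd a + 1"
  and not_p_dvd_a_sub_2: "\<not> int p dvd a - 2"
  using p_dvd_if_dvd_a_sub[of 0] p_dvd_if_dvd_a_sub[of 1] p_dvd_if_dvd_a_sub[of "-1"]
    p_dvd_if_dvd_a_sub[of 2] not_p_dvd_small by auto

lemma not_p_dvd_a_pow: "\<not> int p dvd a^k"
  using not_p_dvd_a prime_int_p prime_dvd_power by blast

lemma a_pow_cong:
  "[a^2 = a - 1] (mod n)" "[a^3 = -1] (mod n)" "[a^4 = -a] (mod n)"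
  "[a^5 = 1 - a] (mod n)" "[a^6 = 1] (mod n)"
proof -
  have n_dvd_multiple: "a^2 - a + 1 = Y \<Longrightarrow> n dvd Y * Z" for Y Z
    using n_dvd by (metis dvd_mult2)
  have "a^2 - (a - 1) = (a^2 - a + 1) * 1"
    by simp
  then show "[a^2 = a - 1] (mod n)"
    unfolding cong_iff_dvd_diff using n_dvd_multiple by metis
  have "a^3 - (-1) = (a^2 - a + 1) * (a + 1)"
    by (simp add: power2_eq_square power3_eq_cube algebra_simps)
  then show "[a^3 = -1] (mod n)"
    unfolding cong_iff_dvd_diff using n_dvd_multiple by metis
  have "a^4 - (-a) = (a^2 - a + 1) * (a^2 + a)"
    by (simp add: power2_eq_square power3_eq_cube power4_eq_xxxx algebra_simps)
  then show "[a^4 = -a] (mod n)"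
    unfolding cong_iff_dvd_diff using n_dvd_multiple by metis
  have "a^5 - (1 - a) = (a^2 - a + 1) * (a^3 + a^2 - 1)"
    by (simp add: eval_nat_numeral algebra_simps)
  then show "[a^5 = 1 - a] (mod n)"
    unfolding cong_iff_dvd_diff using n_dvd_multiple by metis
  have "a^6 - 1 = (a^2 - a + 1) * ((a + 1) * (a^3 - 1))"
    by (simp add: eval_nat_numeral algebra_simps)
  then show "[a^6 = 1] (mod n)"
    unfolding cong_iff_dvd_diff using n_dvd_multiple by metis
qed

lemma p_dvd_cong_iff: "[x = y] (mod n) \<Longrightarrow> int p dvd x - c \<longleftrightarrow> int p dvd y - c"
  using cong_n_imp_cong_p by (metis cong_diff cong_dvd_iff cong_refl)

lemma not_p_dvd_a_pow_sub_1:
  assumes "0 < d" "d < 6"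
  shows "\<not> int p dvd a^d - 1"
proof -
  have "d = 1 \<or> d = 2 \<or> d = 3 \<or> d = 4 \<or> d = 5"
    using assms by arith
  moreover have "\<not> int p dvd a^2 - 1"
    using p_dvd_cong_iff[OF a_pow_cong(1), of 1] not_p_dvd_a_sub_2 by (simp add: algebra_simps)
  moreover have "\<not> int p dvd a^3 - 1"
    using p_dvd_cong_iff[OF a_pow_cong(2), of 1] not_p_dvd_small by simp
  moreover have "\<not> int p dvd a^4 - 1"
    using p_dvd_cong_iff[OF a_pow_cong(3), of 1] not_p_dvd_a_add_1 dvd_minus_iff[of "int p" "a + 1"]
    by simp
  moreover have "\<not> int p dvd a^5 - 1"
    using p_dvd_cong_iff[OF a_pow_cong(4), of 1] not_p_dvd_a by simp
  ultimately show ?thesis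
    using not_p_dvd_a_sub_1 by (elim disjE) simp_all
qed

lemma a_pow_mod_6: "[a^k = a^(k mod 6)] (mod n)"
proof -
  have "a^k = a^(6 * (k div 6) + k mod 6)"
    by simp
  also have "\<dots> = (a^6)^(k div 6) * a^(k mod 6)"
    by (simp only: power_add power_mult)
  also have "[(a^6)^(k div 6) * a^(k mod 6) = 1^(k div 6) * a^(k mod 6)] (mod n)"
    by (intro cong_mult cong_pow a_pow_cong(5) cong_refl)
  finally show ?thesis
    by simp
qed

lemma a_pow_distinct_mod_p:
  assumes "j < 6" "k < 6" "j \<noteq> k"
  shows "\<not> int p dvd a^j - a^k"
proof -
  have "\<not> int p dvd a^k - a^j" if "j < k" "k < 6" for j k :: nat
  proof -
    have "a^k - a^j = a^j * (a^(k - j) - 1)"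
      using that by (simp add: algebra_simps flip: power_add)
    then show ?thesis
      using not_p_dvd_a_pow not_p_dvd_a_pow_sub_1[of "k - j"] that prime_int_p
      by (simp add: prime_dvd_mult_iff)
  qed
  from this[of j k] this[of k j] assms show ?thesis
    by (metis dvd_minus_iff linorder_neqE_nat minus_diff_eq)
qed

definition sixth_roots :: "int set" where
  "sixth_roots = (\<lambda>k. a^k mod n) ` {..<6}"

lemma tl_set_eq_sixth_roots: "tl_set n a (a - 1) 1 = sixth_roots"
proof -
  have "{..<6::nat} = {0, 1, 2, 3, 4, 5}"
    by auto
  moreover have "a^2 mod n = (a - 1) mod n" "a^3 mod n = (-1) mod n" "a^4 mod n = (-a) mod n"
    "a^5 mod n = (-(a - 1)) mod n"
    using a_pow_cong unfolding cong_def by auto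
  ultimately show ?thesis
    unfolding tl_set_def sixth_roots_def by auto
qed

lemma card_sixth_roots: "card sixth_roots = 6"
proof -
  have "inj_on (\<lambda>k. a^k mod n) {..<6}"
    using a_pow_distinct_mod_p p_dvd_n by (auto intro!: inj_onI dest: mod_eq_dvd_iff[THEN iffD1] dvd_trans)
  then show ?thesis
    unfolding sixth_roots_def by (simp add: card_image)
qed

lemma sixth_roots_subset_Zn: "sixth_roots \<subseteq> Zn n"
  unfolding sixth_roots_def using n_gt_1 mod_in_Zn by auto

lemma one_in_sixth_roots: "1 \<in> sixth_roots"
  unfolding sixth_roots_def using n_gt_1 by (auto intro!: image_eqI[of _ _ 0])

lemma sixth_roots_unit_subgroup: "unit_subgroup n sixth_roots"
  unfolding unit_subgroup_def
proof (intro conjI ballI)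
  have "\<not> int p dvd a^k mod n" for k
    using not_p_dvd_a_pow p_dvd_n by (simp add: dvd_mod_iff)
  then show "sixth_roots \<subseteq> {m \<in> Zn n. coprime m n}"
    using sixth_roots_subset_Zn coprime_n_iff unfolding sixth_roots_def by auto
  show "1 mod n \<in> sixth_roots"
    using one_in_sixth_roots n_gt_1 by simp
  fix x y assume "x \<in> sixth_roots" "y \<in> sixth_roots"
  then obtain j k where "x = a^j mod n" "y = a^k mod n"
    unfolding sixth_roots_def by blast
  then have "(x * y) mod n = a^(j + k) mod n"
    by (simp add: mod_mult_eq power_add)
  also have "\<dots> = a^((j + k) mod 6) mod n"
    using a_pow_mod_6 unfolding cong_def by blast
  finally have "(x * y) mod n = a^((j + k) mod 6) mod n" .
  then show "(x * y) mod n \<in> sixth_roots"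
    unfolding sixth_roots_def by simp
qed

lemma sixth_roots_sub_1_coprime: "\<forall>m\<in>sixth_roots. m \<noteq> 1 \<longrightarrow> coprime (m - 1) n"
proof (intro ballI impI)
  fix m assume "m \<in> sixth_roots" "m \<noteq> 1"
  then obtain k where k: "k < 6" "m = a^k mod n"
    unfolding sixth_roots_def by blast
  with \<open>m \<noteq> 1\<close> n_gt_1 have "k \<noteq> 0"
    by (cases k) auto
  have "[m = a^k] (mod n)"
    using k(2) by (simp add: cong_def)
  then have "int p dvd m - 1 \<longleftrightarrow> int p dvd a^k - 1"
    by (rule p_dvd_cong_iff)
  with k(1) \<open>k \<noteq> 0\<close> show "coprime (m - 1) n"
    using not_p_dvd_a_pow_sub_1[of k] coprime_n_iff by simp
qed

lemma six_valent_FFC_TL: "six_valent_FFC n (TL n a (a - 1) 1)"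
proof -
  have a_root: "a mod n \<in> sixth_roots"
    unfolding sixth_roots_def by (auto intro!: image_eqI[of _ _ 1])
  have "a mod n \<noteq> 1"
  proof
    assume "a mod n = 1"
    with n_gt_1 have "a mod n = 1 mod n"
      by simp
    then have "n dvd a - 1"
      by (simp only: mod_eq_dvd_iff)
    with p_dvd_n not_p_dvd_a_sub_1 show False
      using dvd_trans by blast
  qed
  have "(\<lambda>h. (1 * h) mod n) ` sixth_roots = id ` sixth_roots"
    using sixth_roots_subset_Zn Zn_mod by (intro image_cong) auto
  then have orbit_1: "orbit n sixth_roots 1 = sixth_roots"
    unfolding orbit_eq_image by simp
  show ?thesis
    unfolding six_valent_FFC_def
  proof (intro exI conjI)
    show "tl_ok n a (a - 1) 1"
      unfolding tl_ok_def tl_set_eq_sixth_roots by (rule card_sixth_roots)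
    show "TL n a (a - 1) 1 = TL n a (a - 1) 1" ..
    show "frobenius_ZnH n sixth_roots"
      using frobenius_ZnH_if_fixed_point_free[OF n_gt_1 sixth_roots_unit_subgroup a_root
          \<open>a mod n \<noteq> 1\<close> sixth_roots_sub_1_coprime] .
    show "first_kind n sixth_roots 1"
      unfolding first_kind_def orbit_1
      using add_span_eq_Zn[OF _ one_in_sixth_roots] card_sixth_roots n_gt_1 by (simp add: Zn_def)
    show "TL n a (a - 1) 1 = cay n (orbit n sixth_roots 1)"
      unfolding TL_def tl_set_eq_sixth_roots orbit_1 ..
  qed
qed

lemma prod_sub_a_pow_cong: "[(\<Prod>k<6. (h - a^k)) = h^6 - 1] (mod n)"
proof -
  have "(\<Prod>k<6. (h - a^k)) = (h - 1) * (h - a) * (h - a^2) * (h - a^3) * (h - a^4) * (h - a^5)"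
    by (simp add: eval_nat_numeral mult_ac)
  also have "[\<dots> = (h - 1) * (h - a) * (h - (a - 1)) * (h - (-1)) * (h - (-a)) * (h - (1 - a))] (mod n)"
    by (intro cong_mult cong_diff cong_refl a_pow_cong)
  also have "(h - 1) * (h - a) * (h - (a - 1)) * (h - (-1)) * (h - (-a)) * (h - (1 - a))
      = h^6 - 1 + (a^2 - a + 1) * ((h^2 - 1) * ((a^2 - a + 1) - 2 - 2 * h^2))"
    by (simp add: eval_nat_numeral algebra_simps)
  also have "[\<dots> = h^6 - 1] (mod n)"
    using n_dvd by (simp add: cong_iff_dvd_diff)
  finally show ?thesis .
qed

text \<open>
  The root \<open>h\<close> of \<open>x^6 - 1\<close> is congruent modulo \<open>p\<close> to exactly one \<open>a^k\<close>; the other five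
  factors \<open>h - a^j\<close> are then units, so all of \<open>n\<close> divides \<open>h - a^k\<close>.
\<close>
lemma sixth_root_of_unity_cases:
  assumes "[h^6 = 1] (mod n)"
  obtains k where "k < 6" "[h = a^k] (mod n)"
proof -
  have n_dvd_prod: "n dvd (\<Prod>k<6. (h - a^k))"
    using cong_trans[OF prod_sub_a_pow_cong cong_diff[OF assms cong_refl[of 1]]]
    by (simp add: cong_0_iff)
  then have "int p dvd (\<Prod>k<6. (h - a^k))"
    by (rule dvd_trans[OF p_dvd_n])
  then obtain k where k: "k < 6" "int p dvd h - a^k"
    unfolding prime_dvd_prod_iff[OF finite_lessThan prime_int_p] by blast
  have "coprime (h - a^j) n" if "j \<in> {..<6} - {k}" for j
    unfolding coprime_n_iff
  proof
    assume "int p dvd h - a^j"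
    with k(2) have "int p dvd (h - a^k) - (h - a^j)"
      by (rule dvd_diff)
    with that k(1) show False
      using a_pow_distinct_mod_p[of j k] by simp
  qed
  then have "coprime (\<Prod>j\<in>{..<6} - {k}. (h - a^j)) n"
    by (rule prod_coprime_left)
  moreover have "(\<Prod>j<6. (h - a^j)) = (h - a^k) * (\<Prod>j\<in>{..<6} - {k}. (h - a^j))"
    using prod.remove[of "{..<6::nat}" k] k(1) by simp
  with n_dvd_prod have "n dvd (h - a^k) * (\<Prod>j\<in>{..<6} - {k}. (h - a^j))"
    by simp
  ultimately have "n dvd h - a^k"
    using coprime_dvd_mult_left_iff coprime_commute by metis
  with k(1) that show ?thesis
    by (simp add: cong_iff_dvd_diff)
qed

lemma unit_subgroup_card_6_eq_sixth_roots:
  assumes U: "unit_subgroup n H" and "card H = 6"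
  shows "H = sixth_roots"
proof (rule card_subset_eq)
  show "finite sixth_roots"
    unfolding sixth_roots_def by simp
  show "H \<subseteq> sixth_roots"
  proof
    fix h assume "h \<in> H"
    then have "h \<in> Zn n"
      using U unfolding unit_subgroup_def by auto
    obtain k where "k < 6" "[h = a^k] (mod n)"
      using sixth_root_of_unity_cases unit_subgroup_pow_card[OF U \<open>h \<in> H\<close>] \<open>card H = 6\<close>
      by metis
    with \<open>h \<in> Zn n\<close> show "h \<in> sixth_roots"
      unfolding sixth_roots_def by (metis Zn_mod cong_def image_eqI lessThan_iff)
  qed
  show "card H = card sixth_roots"
    using \<open>card H = 6\<close> card_sixth_roots by simp
qed

lemma six_valent_FFC_iso_TL:
  assumes "six_valent_FFC n \<Gamma>"
  shows "graph_iso n \<Gamma> (TL n a (a - 1) 1)"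
proof -
  obtain H s where "unit_subgroup n H" "card H = 6" "coprime s n"
    and \<Gamma>: "\<Gamma> = cay n (orbit n H s)"
    using six_valent_FFC_imp_orbit_graph[OF assms n_gt_1] by blast
  then have "H = sixth_roots"
    using unit_subgroup_card_6_eq_sixth_roots by blast
  then show ?thesis
    using graph_iso_cay_scale[OF _ \<open>coprime s n\<close> sixth_roots_subset_Zn] n_gt_1
    unfolding \<Gamma> orbit_eq_image TL_def tl_set_eq_sixth_roots by simp
qed

end

theorem corollary2p3:
  fixes p :: nat and e :: nat and v :: int
  assumes "prime p" and "p mod 6 = 1" and "e \<ge> 1"
    and "[v^2 = -3] (mod (int p ^ e))"
  shows "let n = int p ^ e; a = ((n + 1) div 2) * (v + 1) in
           tl_ok n a (a - 1) 1 \<and> six_valent_FFC n (TL n a (a - 1) 1) \<and>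
           (\<forall>\<Gamma>. six_valent_FFC n \<Gamma> \<longrightarrow> graph_iso n \<Gamma> (TL n a (a - 1) 1))"
proof -
  define n where "n = int p ^ e"
  define a where "a = ((n + 1) div 2) * (v + 1)"
  have "p > 1"
    using assms(1) prime_gt_1_nat by blast
  with assms(2) have "p > 3"
    by presburger
  have "odd p"
    using assms(2) by presburger
  then have "n dvd a^2 - a + 1"
    using assms(4) unfolding a_def n_def by (intro sqrt_neg3_imp_dvd_sixth_cyclotomic) simp_all
  then interpret primitive_sixth_root p e n a
    using assms \<open>p > 3\<close> n_def by unfold_locales
  show ?thesis
    unfolding Let_def n_def[symmetric] a_def[symmetric] tl_ok_def tl_set_eq_sixth_roots
    using card_sixth_roots six_valent_FFC_TL six_valent_FFC_iso_TL by blast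
qed

end
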